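(* Let $g\in V$ be represented by a pair of finite rooted binary trees $(T_-,T_+)$, each with $n\ge 1$ leaves, together with a bijection $\sigma$ of $\{1,\dots,n\}$. Form the closed labelled strand diagram $D_0(g)$ of $g$ as described in the context, and apply labelled Rule I repeatedly, in any order, until no edge goes from a merge vertex to a split vertex. Then the final labelled diagram has at most $n$ connected components, and the sum of all its edge labels is at most $2^{n-1}$.
   Context: The Cantor set $\mathfrak C=\{0,1\}^{\mathbb N}$. A finite rooted binary tree with $n$ leaves, ordered left to right, determines a partition of $\mathfrak C$ into $n$ cones $u_1\mathfrak C,\dots,u_n\mathfrak C$, where $u_i$ is the finite binary address of the $i$-th leaf (left child appends $0$, right child appends $1$). A triple $(T_-,T_+,\sigma)$ represents the element $g$ of Thompson's group $V$ given by $g(u_i w)=v_{\sigma(i)}w$, where $u_i$ (resp. $v_j$) are the leaf addresses of $T_-$ (resp. $T_+$). Closed labelled strand diagram $D_0(g)$: a finite directed graph with $2n-2$ trivalent vertices. The $n-1$ internal nodes of $T_-$ become split vertices (one incoming edge, two outgoing edges ordered left/right), with edges directed from the root toward the leaves; the $n-1$ internal nodes of $T_+$ become merge vertices (two incoming edges ordered left/right, one outgoing edge), with edges directed from the leaves toward the root. The $i$-th leaf of $T_-$ is joined to the $\sigma(i)$-th leaf of $T_+$ (the resulting bivalent points are erased, so each such path becomes a single edge), and finally the root of $T_+$ is joined by an edge to the root of $T_-$ (again erasing bivalent points). If $n=1$ the diagram is a single closed loop with no vertices. Every edge carries a nonnegative integer label: the edge (or loop) passing through the glued roots has label $1$, all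 other edges have label $0$. Labelled Rule I: suppose an edge $e$ with label $y$ goes from a merge vertex $m$ to a split vertex $s$, where $m$ has incoming edges $x_1$ (left) and $x_2$ (right) and $s$ has outgoing edges $z_1$ (left) and $z_2$ (right). Delete $m$, $s$ and $e$, and for $i=1,2$ join the strand $x_i$ directly to the strand $z_i$ (concatenating $x_i$, $e$, $z_i$). The label of each resulting edge is the sum of the labels of all old edge-pieces it is composed of, counted with multiplicity (e.g. if $x_1,x_2,z_1,z_2$ are distinct, the new edges have labels $x_1+y+z_1$ and $x_2+y+z_2$; if $x_2=z_1$, the result is a single edge with label $x_1+x_2+2y+z_2$). Strands that close up on themselves become closed loops (circle components without vertices), whose label is the sum of the labels along them. *)

theory Defs
  imports Main "HOL-Library.Multiset"
begin

datatype btree = Leaf | Node btree btree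

text \<open>Addresses: lists of booleans, False = 0 = left child, True = 1 = right child.
  Leaf addresses listed left to right.\<close>
fun leaves :: "btree \<Rightarrow> bool list list" where
  "leaves Leaf = [[]]"
| "leaves (Node l r) = map (Cons False) (leaves l) @ map (Cons True) (leaves r)"

fun inodes :: "btree \<Rightarrow> bool list set" where
  "inodes Leaf = {}"
| "inodes (Node l r) = insert [] (Cons False ` inodes l \<union> Cons True ` inodes r)"

definition nleaves :: "btree \<Rightarrow> nat" where
  "nleaves T = length (leaves T)"

text \<open>Vertices are named (False, a) for the internal node at address a of T_-
  (split vertices) and (True, b) for the internal node at address b of T_+
  (merge vertices).\<close>
type_synonym vx = "bool \<times> bool list"

text \<open>Ports: a split vertex has in-port PC and out-ports PL (left), PR (right);
  a merge vertex has in-ports PL (left), PR (right) and out-port PC.\<close>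
datatype port = PL | PR | PC

text \<open>A diagram: vertex set; each edge is identified by its source out-port,
  sd_nxt maps an out-port to the in-port the edge ends at; sd_lab gives the label
  of the edge starting at an out-port; sd_loops is the multiset of labels of the
  closed loops (vertex-free circle components).\<close>
record sd =
  sd_verts :: "vx set"
  sd_nxt :: "vx \<times> port \<Rightarrow> vx \<times> port"
  sd_lab :: "vx \<times> port \<Rightarrow> nat"
  sd_loops :: "nat multiset"

definition outports :: "sd \<Rightarrow> (vx \<times> port) set" where
  "outports D = {(v, p). v \<in> sd_verts D \<and> (if fst v then p = PC else p \<noteq> PC)}"

definition mergein :: "bool list \<Rightarrow> vx \<times> port" where
  "mergein b = ((True, butlast b), if last b then PR else PL)"

definition leafidx :: "bool list list \<Rightarrow> bool list \<Rightarrow> nat" where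
  "leafidx us u = (THE i. i < length us \<and> us ! i = u)"

text \<open>Target of the edge leaving the split vertex toward child address c of T_-:
  either the internal node c, or (if c is the i-th leaf, 1-based) the in-port of the
  merge vertex above the sigma(i)-th leaf of T_+.\<close>
definition childtgt :: "btree \<Rightarrow> btree \<Rightarrow> (nat \<Rightarrow> nat) \<Rightarrow> bool list \<Rightarrow> vx \<times> port" where
  "childtgt Tm Tp \<sigma> c =
     (if c \<in> inodes Tm then ((False, c), PC)
      else mergein (leaves Tp ! (\<sigma> (leafidx (leaves Tm) c + 1) - 1)))"

definition D0 :: "btree \<Rightarrow> btree \<Rightarrow> (nat \<Rightarrow> nat) \<Rightarrow> sd" where
  "D0 Tm Tp \<sigma> =
    \<lparr> sd_verts = Pair False ` inodes Tm \<union> Pair True ` inodes Tp,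
      sd_nxt = (\<lambda>(v, p).
         if \<not> fst v then
           (case p of PL \<Rightarrow> childtgt Tm Tp \<sigma> (snd v @ [False])
                    | PR \<Rightarrow> childtgt Tm Tp \<sigma> (snd v @ [True])
                    | PC \<Rightarrow> (v, p))
         else
           (case p of PC \<Rightarrow> (if snd v = [] then ((False, []), PC) else mergein (snd v))
                    | _ \<Rightarrow> (v, p))),
      sd_lab = (\<lambda>q. if q = ((True, []), PC) then 1 else 0),
      sd_loops = (if Tm = Leaf then {#1#} else {#}) \<rparr>"

definition rule1_res :: "sd \<Rightarrow> vx \<Rightarrow> vx \<Rightarrow> sd" where
  "rule1_res D m s =
    (let y = sd_lab D (m, PC);
         cont = (\<lambda>t. if t = (m, PL) then Some (s, PL)
                      else if t = (m, PR) then Some (s, PR) else None);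
         follow = (\<lambda>p. let t0 = sd_nxt D p in
            (case cont t0 of
               None \<Rightarrow> (t0, sd_lab D p)
             | Some q1 \<Rightarrow> let t1 = sd_nxt D q1 in
                 (case cont t1 of
                    None \<Rightarrow> (t1, sd_lab D p + y + sd_lab D q1)
                  | Some q2 \<Rightarrow> (sd_nxt D q2, sd_lab D p + y + sd_lab D q1 + y + sd_lab D q2))));
         a = sd_nxt D (s, PL); b = sd_nxt D (s, PR);
         l1 = sd_lab D (s, PL); l2 = sd_lab D (s, PR);
         newloops = (if a = (m, PL) then {#l1 + y#} else {#})
                  + (if b = (m, PR) then {#l2 + y#} else {#})
                  + (if a = (m, PR) \<and> b = (m, PL) then {#l1 + l2 + 2 * y#} else {#})
     in \<lparr> sd_verts = sd_verts D - {m, s},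
          sd_nxt = (\<lambda>p. fst (follow p)),
          sd_lab = (\<lambda>p. snd (follow p)),
          sd_loops = sd_loops D + newloops \<rparr>)"

definition rule1_step :: "sd \<Rightarrow> sd \<Rightarrow> bool" where
  "rule1_step D D' \<longleftrightarrow>
    (\<exists>m s. m \<in> sd_verts D \<and> fst m \<and> s \<in> sd_verts D \<and> \<not> fst s \<and>
           sd_nxt D (m, PC) = (s, PC) \<and> D' = rule1_res D m s)"

definition terminal :: "sd \<Rightarrow> bool" where
  "terminal D \<longleftrightarrow>
    \<not> (\<exists>m \<in> sd_verts D. \<exists>s \<in> sd_verts D. fst m \<and> \<not> fst s \<and> sd_nxt D (m, PC) = (s, PC))"

definition adjrel :: "sd \<Rightarrow> vx rel" where
  "adjrel D = {(v, w). \<exists>p. (v, p) \<in> outports D \<and> fst (sd_nxt D (v, p)) = w}"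

definition comprel :: "sd \<Rightarrow> vx rel" where
  "comprel D = {(v, w). v \<in> sd_verts D \<and> w \<in> sd_verts D \<and>
                        (v, w) \<in> (adjrel D \<union> (adjrel D)\<inverse>)\<^sup>*}"

definition num_components :: "sd \<Rightarrow> nat" where
  "num_components D = card (sd_verts D // comprel D) + size (sd_loops D)"

definition label_sum :: "sd \<Rightarrow> nat" where
  "label_sum D = (\<Sum>p \<in> outports D. sd_lab D p) + sum_mset (sd_loops D)"

end

theory Submission
  imports Defs
begin

(* Each application of Rule I deletes two vertices, the merge vertex m and the split vertex s
   joined by the reduced edge e.  It raises the number of components by at most one: a vertex not
   connected to m keeps its old component, every other surviving vertex is connected to the
   source of one of the at most two rerouted edges entering m, and each of these edges that
   closes up becomes a new loop instead.  It raises the total label by exactly the label y of e,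
   which is counted twice, hence at most doubles it.  As D0(g) has 2n - 2 vertices, one component
   and total label 1, after the k \<le> n - 1 steps performed there are at most 1 + k \<le> n
   components and the total label is at most 2^k \<le> 2^(n-1). *)

lemma finite_inodes: "finite (inodes T)"
  by (induction T) auto

lemma length_leaves: "length (leaves T) = Suc (card (inodes T))"
proof (induction T)
  case Leaf
  then show ?case by simp
next
  case (Node l r)
  have "card (inodes (Node l r)) = Suc (card (Cons False ` inodes l \<union> Cons True ` inodes r))"
    by (simp add: card_insert_disjoint finite_inodes image_iff)
  also have "\<dots> = Suc (card (inodes l) + card (inodes r))"
    by (subst card_Un_disjoint) (auto simp: finite_inodes card_image)
  finally show ?case
    using Node by simp
qed

lemma nleaves_eq_1_iff: "nleaves T = 1 \<longleftrightarrow> T = Leaf"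
  by (cases T) (auto simp: nleaves_def length_leaves)

lemma distinct_leaves: "distinct (leaves T)"
  by (induction T) (auto simp: distinct_map)

lemma leaf_notin_inodes: "u \<in> set (leaves T) \<Longrightarrow> u \<notin> inodes T"
  by (induction T arbitrary: u) auto

lemma Nil_in_inodes: "T \<noteq> Leaf \<Longrightarrow> [] \<in> inodes T"
  by (cases T) auto

lemma Nil_notin_leaves: "T \<noteq> Leaf \<Longrightarrow> [] \<notin> set (leaves T)"
  by (cases T) auto

lemma snoc_in_tree: "a \<in> inodes T \<Longrightarrow> a @ [x] \<in> inodes T \<or> a @ [x] \<in> set (leaves T)"
proof (induction T arbitrary: a)
  case Leaf
  then show ?case by simp
next
  case (Node l r)
  show ?case
  proof (cases a)
    case Nil
    then show ?thesis
      by (cases l; cases r; cases x) auto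
  next
    case (Cons d a')
    show ?thesis
    proof (cases d)
      case True
      with Cons Node.prems Node.IH(2) [of a'] show ?thesis by auto
    next
      case False
      with Cons Node.prems Node.IH(1) [of a'] show ?thesis by auto
    qed
  qed
qed

lemma butlast_in_inodes:
  "c \<in> inodes T \<or> c \<in> set (leaves T) \<Longrightarrow> c \<noteq> [] \<Longrightarrow> butlast c \<in> inodes T"
proof (induction T arbitrary: c)
  case Leaf
  then show ?case by simp
next
  case (Node l r)
  then obtain x c' where c: "c = x # c'"
    by (cases c) auto
  show ?case
  proof (cases "c' = []")
    case True
    with c show ?thesis by simp
  next
    case False
    with Node c show ?thesis
      by (cases x) auto
  qed
qed

lemma leafidx_nth: "distinct us \<Longrightarrow> i < length us \<Longrightarrow> leafidx us (us ! i) = i"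
  unfolding leafidx_def by (rule the_equality) (auto simp: nth_eq_iff_index_eq)

section \<open>Well-formed diagrams and their components\<close>

definition inports :: "sd \<Rightarrow> (vx \<times> port) set" where
  "inports D = {(v, p). v \<in> sd_verts D \<and> (if fst v then p \<noteq> PC else p = PC)}"

definition wf_sd :: "sd \<Rightarrow> bool" where
  "wf_sd D \<longleftrightarrow> finite (sd_verts D) \<and> bij_betw (sd_nxt D) (outports D) (inports D)"

lemma port_neq_PC_iff: "p \<noteq> PC \<longleftrightarrow> p = PL \<or> p = PR"
  by (cases p) auto

lemma outports_split_merge:
  "outports D = (\<lambda>v. (v, PC)) ` {v \<in> sd_verts D. fst v}
     \<union> (\<lambda>v. (v, PL)) ` {v \<in> sd_verts D. \<not> fst v} \<union> (\<lambda>v. (v, PR)) ` {v \<in> sd_verts D. \<not> fst v}"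
  by (auto simp: outports_def port_neq_PC_iff)

lemma inports_split_merge:
  "inports D = (\<lambda>v. (v, PC)) ` {v \<in> sd_verts D. \<not> fst v}
     \<union> (\<lambda>v. (v, PL)) ` {v \<in> sd_verts D. fst v} \<union> (\<lambda>v. (v, PR)) ` {v \<in> sd_verts D. fst v}"
  by (auto simp: inports_def port_neq_PC_iff)

lemma card_ports:
  fixes A B :: "vx set"
  assumes "finite A" "finite B"
  shows "card ((\<lambda>v. (v, PC)) ` A \<union> (\<lambda>v. (v, PL)) ` B \<union> (\<lambda>v. (v, PR)) ` B) = card A + 2 * card B"
    (is "card (?C \<union> ?L \<union> ?R) = _")
proof -
  have "card (?C \<union> ?L \<union> ?R) = card (?C \<union> ?L) + card ?R"
    by (rule card_Un_disjoint) (use assms in auto)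
  also have "card (?C \<union> ?L) = card ?C + card ?L"
    by (rule card_Un_disjoint) (use assms in auto)
  finally show ?thesis
    by (simp add: card_image inj_on_def)
qed

lemma card_outports:
  "finite (sd_verts D) \<Longrightarrow>
     card (outports D) = card {v \<in> sd_verts D. fst v} + 2 * card {v \<in> sd_verts D. \<not> fst v}"
  unfolding outports_split_merge by (rule card_ports) auto

lemma card_inports:
  "finite (sd_verts D) \<Longrightarrow>
     card (inports D) = card {v \<in> sd_verts D. \<not> fst v} + 2 * card {v \<in> sd_verts D. fst v}"
  unfolding inports_split_merge by (rule card_ports) auto

lemma finite_outports: "finite (sd_verts D) \<Longrightarrow> finite (outports D)"
  unfolding outports_split_merge by simp

lemma fst_outport: "p \<in> outports D \<Longrightarrow> fst p \<in> sd_verts D"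
  by (cases p) (auto simp: outports_def)

definition links :: "sd \<Rightarrow> vx rel" where
  "links D = adjrel D \<union> (adjrel D)\<inverse>"

lemma comprel_links:
  "comprel D = {(v, w). v \<in> sd_verts D \<and> w \<in> sd_verts D \<and> (v, w) \<in> (links D)\<^sup>*}"
  by (simp add: comprel_def links_def)

lemma link_outport: "p \<in> outports D \<Longrightarrow> (fst p, fst (sd_nxt D p)) \<in> links D"
  by (cases p) (auto simp: links_def adjrel_def)

lemma links_subset:
  assumes "wf_sd D"
  shows "links D \<subseteq> sd_verts D \<times> sd_verts D"
proof -
  have "sd_nxt D ` outports D \<subseteq> inports D"
    using assms by (simp add: wf_sd_def bij_betw_def)
  then have "adjrel D \<subseteq> sd_verts D \<times> sd_verts D"
    by (fastforce simp: adjrel_def outports_def inports_def)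
  then show ?thesis
    by (auto simp: links_def)
qed

lemma rtrancl_links_verts:
  assumes "wf_sd D" "(x, z) \<in> (links D)\<^sup>*" "x \<in> sd_verts D"
  shows "z \<in> sd_verts D"
  using assms(2,3) links_subset [OF assms(1)] by (induction rule: rtrancl_induct) auto

lemma rtrancl_links_sym: "(x, z) \<in> (links D)\<^sup>* \<Longrightarrow> (z, x) \<in> (links D)\<^sup>*"
proof -
  have "sym ((links D)\<^sup>*)"
    by (rule sym_rtrancl) (auto simp: links_def sym_def)
  then show "(x, z) \<in> (links D)\<^sup>* \<Longrightarrow> (z, x) \<in> (links D)\<^sup>*"
    by (auto dest: symD)
qed

lemma equiv_comprel: "equiv (sd_verts D) (comprel D)"
proof (rule equivI)
  show "refl_on (sd_verts D) (comprel D)"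
    by (auto simp: refl_on_def comprel_links)
  show "comprel D \<subseteq> sd_verts D \<times> sd_verts D"
    by (auto simp: comprel_links)
  show "sym (comprel D)"
    by (rule symI) (auto simp: comprel_links intro: rtrancl_links_sym)
  show "trans (comprel D)"
    by (rule transI) (auto simp: comprel_links intro: rtrancl_trans)
qed

lemma card_quotient_le_card_cover:
  assumes eq: "equiv A R" and "finite T" and cover: "\<forall>x\<in>A. \<exists>t\<in>T. (x, t) \<in> R"
  shows "card (A // R) \<le> card T"
proof -
  have "A // R \<subseteq> (\<lambda>t. R `` {t}) ` T"
  proof
    fix X
    assume "X \<in> A // R"
    then obtain x where X: "X = R `` {x}" "x \<in> A"
      by (auto elim: quotientE)
    with cover obtain t where "t \<in> T" "(x, t) \<in> R"
      by auto
    with X show "X \<in> (\<lambda>t. R `` {t}) ` T"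
      using equiv_class_eq [OF eq] by blast
  qed
  then have "card (A // R) \<le> card ((\<lambda>t. R `` {t}) ` T)"
    using \<open>finite T\<close> by (simp add: card_mono)
  also have "\<dots> \<le> card T"
    using \<open>finite T\<close> by (rule card_image_le)
  finally show ?thesis .
qed

section \<open>One application of Rule I\<close>

lemma sd_verts_rule1_res: "sd_verts (rule1_res D m s) = sd_verts D - {m, s}"
  by (simp add: rule1_res_def Let_def)

lemma sd_loops_rule1_res:
  "sd_loops (rule1_res D m s) = sd_loops D
     + (if sd_nxt D (s, PL) = (m, PL) then {#sd_lab D (s, PL) + sd_lab D (m, PC)#} else {#})
     + (if sd_nxt D (s, PR) = (m, PR) then {#sd_lab D (s, PR) + sd_lab D (m, PC)#} else {#})
     + (if sd_nxt D (s, PL) = (m, PR) \<and> sd_nxt D (s, PR) = (m, PL)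
        then {#sd_lab D (s, PL) + sd_lab D (s, PR) + 2 * sd_lab D (m, PC)#} else {#})"
  by (simp add: rule1_res_def Let_def add.assoc)

lemma rule1_res_untouched:
  assumes "sd_nxt D p \<noteq> (m, PL)" "sd_nxt D p \<noteq> (m, PR)"
  shows "sd_nxt (rule1_res D m s) p = sd_nxt D p \<and> sd_lab (rule1_res D m s) p = sd_lab D p"
  using assms by (simp add: rule1_res_def Let_def)

lemma rule1_res_via_left:
  assumes "sd_nxt D p = (m, PL)" "sd_nxt D (s, PL) \<noteq> (m, PL)"
  shows "sd_nxt (rule1_res D m s) p =
      (if sd_nxt D (s, PL) = (m, PR) then sd_nxt D (s, PR) else sd_nxt D (s, PL))
    \<and> sd_lab (rule1_res D m s) p = sd_lab D p + sd_lab D (m, PC) + sd_lab D (s, PL)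
      + (if sd_nxt D (s, PL) = (m, PR) then sd_lab D (m, PC) + sd_lab D (s, PR) else 0)"
  using assms by (simp add: rule1_res_def Let_def)

lemma rule1_res_via_right:
  assumes "sd_nxt D p = (m, PR)" "sd_nxt D (s, PR) \<noteq> (m, PR)"
  shows "sd_nxt (rule1_res D m s) p =
      (if sd_nxt D (s, PR) = (m, PL) then sd_nxt D (s, PL) else sd_nxt D (s, PR))
    \<and> sd_lab (rule1_res D m s) p = sd_lab D p + sd_lab D (m, PC) + sd_lab D (s, PR)
      + (if sd_nxt D (s, PR) = (m, PL) then sd_lab D (m, PC) + sd_lab D (s, PL) else 0)"
  using assms by (simp add: rule1_res_def Let_def)

locale rule1_redex =
  fixes D :: sd and m s :: vx
  assumes wf: "wf_sd D"
    and m_vert: "m \<in> sd_verts D" and m_merge: "fst m"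
    and s_vert: "s \<in> sd_verts D" and s_split: "\<not> fst s"
    and m_to_s: "sd_nxt D (m, PC) = (s, PC)"
begin

abbreviation "N \<equiv> sd_nxt D"
abbreviation "L \<equiv> sd_lab D"
abbreviation "D' \<equiv> rule1_res D m s"
abbreviation "N' \<equiv> sd_nxt D'"
abbreviation "L' \<equiv> sd_lab D'"
abbreviation "y \<equiv> L (m, PC)"

text \<open>As in Rule I, the edges x1, x2 enter m and the edges (s, PL), (s, PR) leave s;
  t1 and t2 are the in-ports where the latter two end.\<close>
definition "x1 = inv_into (outports D) N (m, PL)"
definition "x2 = inv_into (outports D) N (m, PR)"
abbreviation "t1 \<equiv> N (s, PL)"
abbreviation "t2 \<equiv> N (s, PR)"

lemma finite_verts: "finite (sd_verts D)"
  using wf by (simp add: wf_sd_def)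

lemma N_image: "N ` outports D = inports D"
  using wf by (simp add: wf_sd_def bij_betw_def)

lemma N_eqD: "p \<in> outports D \<Longrightarrow> q \<in> outports D \<Longrightarrow> N p = N q \<Longrightarrow> p = q"
  using wf by (auto simp: wf_sd_def bij_betw_def dest: inj_onD)

lemma N_inport: "p \<in> outports D \<Longrightarrow> N p \<in> inports D"
  using N_image by auto

lemma m_neq_s: "m \<noteq> s"
  using m_merge s_split by auto

lemma redex_ports:
  "(m, PC) \<in> outports D" "(s, PL) \<in> outports D" "(s, PR) \<in> outports D"
  "(m, PL) \<in> inports D" "(m, PR) \<in> inports D" "(s, PC) \<in> inports D"
  using m_vert s_vert m_merge s_split by (auto simp: outports_def inports_def)

lemma x1: "x1 \<in> outports D" "N x1 = (m, PL)"
  using redex_ports N_image unfolding x1_def by (auto intro: inv_into_into f_inv_into_f)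

lemma x2: "x2 \<in> outports D" "N x2 = (m, PR)"
  using redex_ports N_image unfolding x2_def by (auto intro: inv_into_into f_inv_into_f)

lemma t1_t2: "t1 \<in> inports D" "t2 \<in> inports D" "t1 \<noteq> t2" "t1 \<noteq> (s, PC)" "t2 \<noteq> (s, PC)"
  using N_inport redex_ports N_eqD [of "(s, PL)" "(s, PR)"] N_eqD [of "(s, PL)" "(m, PC)"]
    N_eqD [of "(s, PR)" "(m, PC)"] m_to_s m_neq_s
  by auto

lemma x1_x2:
  "x1 = (s, PL) \<longleftrightarrow> t1 = (m, PL)" "x1 = (s, PR) \<longleftrightarrow> t2 = (m, PL)"
  "x2 = (s, PL) \<longleftrightarrow> t1 = (m, PR)" "x2 = (s, PR) \<longleftrightarrow> t2 = (m, PR)"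
  "x1 \<noteq> (m, PC)" "x2 \<noteq> (m, PC)" "x1 \<noteq> x2"
  using x1 x2 redex_ports N_eqD m_to_s by (metis Pair_inject port.distinct)+

lemma outports_D': "outports D' = outports D - {(m, PC), (s, PL), (s, PR)}"
  using m_merge s_split
  by (auto simp: outports_def sd_verts_rule1_res port_neq_PC_iff)

lemma inports_D': "inports D' = inports D - {(m, PL), (m, PR), (s, PC)}"
  using m_merge s_split
  by (auto simp: inports_def sd_verts_rule1_res port_neq_PC_iff)

lemma x1_survives_iff: "x1 \<in> outports D' \<longleftrightarrow> t1 \<noteq> (m, PL) \<and> t2 \<noteq> (m, PL)"
  using outports_D' x1 x1_x2 by auto

lemma x2_survives_iff: "x2 \<in> outports D' \<longleftrightarrow> t1 \<noteq> (m, PR) \<and> t2 \<noteq> (m, PR)"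
  using outports_D' x2 x1_x2 by auto

lemma nxt_lab_D':
  assumes "p \<in> outports D'"
  shows "N' p = (if p = x1 then (if t1 = (m, PR) then t2 else t1)
                 else if p = x2 then (if t2 = (m, PL) then t1 else t2) else N p)
       \<and> L' p = L p
         + (if p = x1 then y + L (s, PL) + (if t1 = (m, PR) then y + L (s, PR) else 0) else 0)
         + (if p = x2 then y + L (s, PR) + (if t2 = (m, PL) then y + L (s, PL) else 0) else 0)"
proof -
  have p: "p \<in> outports D"
    using assms outports_D' by auto
  consider "p = x1" | "p = x2" | "p \<noteq> x1" "p \<noteq> x2"
    by blast
  then show ?thesis
  proof cases
    case 1
    with assms have "t1 \<noteq> (m, PL)"
      using x1_survives_iff by blast
    with 1 show ?thesis
      using rule1_res_via_left [OF x1(2)] x1_x2(7) by auto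
  next
    case 2
    with assms have "t2 \<noteq> (m, PR)"
      using x2_survives_iff by blast
    with 2 show ?thesis
      using rule1_res_via_right [OF x2(2)] x1_x2(7) by auto
  next
    case 3
    then have "N p \<noteq> (m, PL)" "N p \<noteq> (m, PR)"
      using p x1 x2 N_eqD by metis+
    with 3 show ?thesis
      using rule1_res_untouched by auto
  qed
qed

lemma N'_inport:
  assumes p: "p \<in> outports D'"
  shows "N' p \<in> inports D'"
proof -
  have "p \<in> outports D" "p \<noteq> (m, PC)"
    using p outports_D' by auto
  then have "N p \<in> inports D" "N p \<noteq> (s, PC)"
    using N_inport N_eqD redex_ports m_to_s by metis+
  moreover have "p \<noteq> x1 \<Longrightarrow> N p \<noteq> (m, PL)" "p \<noteq> x2 \<Longrightarrow> N p \<noteq> (m, PR)"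
    using \<open>p \<in> outports D\<close> x1 x2 N_eqD by metis+
  ultimately show ?thesis
    using nxt_lab_D' [OF p] p x1_survives_iff x2_survives_iff t1_t2 inports_D'
    by (auto split: if_splits)
qed

lemma N'_inj: "inj_on N' (outports D')"
proof (rule inj_onI)
  fix p q
  assume p: "p \<in> outports D'" and q: "q \<in> outports D'" and eq: "N' p = N' q"
  have "p \<in> outports D" "q \<in> outports D" "p \<noteq> (s, PL)" "p \<noteq> (s, PR)" "q \<noteq> (s, PL)" "q \<noteq> (s, PR)"
    using p q outports_D' by auto
  then have "N p \<noteq> t1" "N p \<noteq> t2" "N q \<noteq> t1" "N q \<noteq> t2" "N p = N q \<Longrightarrow> p = q"
    using N_eqD redex_ports by metis+
  then show "p = q"
    using eq nxt_lab_D' [OF p] nxt_lab_D' [OF q] p q x1_survives_iff x2_survives_iff t1_t2(3)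
    by (auto split: if_splits)
qed

lemma wf_D': "wf_sd D'"
proof -
  have fin: "finite (outports D)"
    by (rule finite_outports [OF finite_verts])
  have "card (outports D') = card (outports D) - 3"
    unfolding outports_D' using redex_ports fin m_neq_s by (simp add: card_Diff_subset)
  moreover have "card (inports D') = card (inports D) - 3"
    unfolding inports_D' using redex_ports fin N_image m_neq_s by (simp add: card_Diff_subset)
  moreover have "card (outports D) = card (inports D)"
    using wf unfolding wf_sd_def by (metis bij_betw_same_card)
  ultimately have "card (N' ` outports D') = card (inports D')"
    using card_image [OF N'_inj] by simp
  moreover have "finite (inports D')"
    using fin N_image inports_D' by (metis finite_Diff finite_imageI)
  ultimately have "N' ` outports D' = inports D'"
    using N'_inport by (intro card_subset_eq) auto
  then show ?thesis
    using finite_verts N'_inj by (simp add: wf_sd_def bij_betw_def sd_verts_rule1_res)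
qed

lemma label_sum_D': "label_sum D' = label_sum D + y"
proof -
  let ?O' = "outports D'"
  have fin: "finite (outports D)"
    by (rule finite_outports [OF finite_verts])
  have "{(m, PC), (s, PL), (s, PR)} \<subseteq> outports D"
    using redex_ports by auto
  then have "sum L (outports D) = sum L ?O' + sum L {(m, PC), (s, PL), (s, PR)}"
    unfolding outports_D' using fin by (rule sum.subset_diff)
  then have old: "sum L (outports D) = sum L ?O' + y + L (s, PL) + L (s, PR)"
    using m_neq_s by simp
  define g1 where "g1 = y + L (s, PL) + (if t1 = (m, PR) then y + L (s, PR) else 0)"
  define g2 where "g2 = y + L (s, PR) + (if t2 = (m, PL) then y + L (s, PL) else 0)"
  have "sum L' ?O' = (\<Sum>p\<in>?O'. L p + (if p = x1 then g1 else 0) + (if p = x2 then g2 else 0))"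
    using nxt_lab_D' unfolding g1_def g2_def by (intro sum.cong) auto
  also have "\<dots> = sum L ?O' + (if x1 \<in> ?O' then g1 else 0) + (if x2 \<in> ?O' then g2 else 0)"
    using fin outports_D' by (simp add: sum.distrib sum.delta')
  finally have "sum L' ?O' = sum L ?O' + (if x1 \<in> ?O' then g1 else 0) + (if x2 \<in> ?O' then g2 else 0)" .
  with old show ?thesis
    unfolding label_sum_def sd_loops_rule1_res x1_survives_iff x2_survives_iff g1_def g2_def
    using t1_t2(3) by auto
qed

lemma y_le_label_sum: "y \<le> label_sum D"
  using member_le_sum [of "(m, PC)" "outports D" L] finite_outports [OF finite_verts] redex_ports
  by (simp add: label_sum_def)

lemma inport_at_redex:
  assumes p: "p \<in> outports D" and at: "fst (N p) \<in> {m, s}"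
  shows "p \<in> {x1, x2, (m, PC)}"
proof -
  obtain v q where vq: "N p = (v, q)"
    by fastforce
  have "(v, q) \<in> inports D"
    using N_inport [OF p] vq by simp
  with at vq m_merge s_split have "(v, q) \<in> {(m, PL), (m, PR), (s, PC)}"
    by (auto simp: inports_def port_neq_PC_iff)
  with vq x1 x2 m_to_s consider "N p = N x1" | "N p = N x2" | "N p = N (m, PC)"
    by auto
  then show ?thesis
    by cases (use N_eqD [OF p x1(1)] N_eqD [OF p x2(1)] N_eqD [OF p redex_ports(1)] in auto)
qed

lemma outport_at_redex: "p \<in> outports D \<Longrightarrow> fst p \<in> {m, s} \<Longrightarrow> p \<in> {(m, PC), (s, PL), (s, PR)}"
  using m_merge s_split by (cases p) (auto simp: outports_def port_neq_PC_iff)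

lemma adjrel_kept:
  assumes "(u, w) \<in> adjrel D" "u \<in> sd_verts D'" "w \<in> sd_verts D'"
  shows "(u, w) \<in> adjrel D'"
proof -
  obtain p where p: "(u, p) \<in> outports D" "fst (N (u, p)) = w"
    using assms(1) by (auto simp: adjrel_def)
  have "(u, p) \<in> outports D'"
    using p(1) assms(2) outports_D' by (auto simp: sd_verts_rule1_res)
  moreover have "(u, p) \<noteq> x1" "(u, p) \<noteq> x2"
    using p(2) assms(3) x1 x2 by (auto simp: sd_verts_rule1_res)
  ultimately have "(u, p) \<in> outports D'" "N' (u, p) = N (u, p)"
    using nxt_lab_D' by auto
  with p(2) show ?thesis
    unfolding adjrel_def by force
qed

lemma link_kept: "(u, w) \<in> links D \<Longrightarrow> u \<in> sd_verts D' \<Longrightarrow> w \<in> sd_verts D' \<Longrightarrow> (u, w) \<in> links D'"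
  unfolding links_def using adjrel_kept by blast

lemma link_m_s: "(m, s) \<in> links D"
  using link_outport [OF redex_ports(1)] m_to_s by simp

definition "boundary = {fst x1, fst x2, fst t1, fst t2} - {m, s}"

definition "rerouted = fst ` ({x1, x2} \<inter> outports D')"

lemma link_to_redex:
  assumes "u \<in> sd_verts D'" "(u, x) \<in> links D" "x \<in> {m, s}"
  shows "u \<in> boundary"
proof -
  have u: "u \<notin> {m, s}"
    using assms(1) by (simp add: sd_verts_rule1_res)
  from assms(2) consider q where "(u, q) \<in> outports D" "fst (N (u, q)) = x"
    | q where "(x, q) \<in> outports D" "fst (N (x, q)) = u"
    by (auto simp: links_def adjrel_def)
  then show ?thesis
  proof cases
    case 1
    then have "(u, q) \<in> {x1, x2, (m, PC)}"
      using assms(3) by (intro inport_at_redex) auto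
    then have "u \<in> fst ` {x1, x2, (m, PC)}"
      by (metis fst_conv imageI)
    with u show ?thesis
      by (auto simp: boundary_def)
  next
    case 2
    then have "(x, q) \<in> {(m, PC), (s, PL), (s, PR)}"
      using assms(3) by (intro outport_at_redex) auto
    with 2 u m_to_s show ?thesis
      by (auto simp: boundary_def)
  qed
qed

lemma path_avoiding_m_kept:
  assumes "(v, w) \<in> (links D)\<^sup>*" "v \<in> sd_verts D" "(v, m) \<notin> (links D)\<^sup>*"
  shows "(v, w) \<in> (links D')\<^sup>*"
  using assms(1)
proof (induction rule: rtrancl_induct)
  case base
  show ?case by simp
next
  case (step u w)
  have in_D': "z \<in> sd_verts D'" if "(v, z) \<in> (links D)\<^sup>*" for z
  proof -
    have "(s, m) \<in> (links D)\<^sup>*"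
      using link_m_s by (rule rtrancl_links_sym [OF r_into_rtrancl])
    then have "(v, s) \<notin> (links D)\<^sup>*"
      using assms(3) rtrancl_trans [of v s "links D" m] by blast
    with that assms(3) have "z \<noteq> m" "z \<noteq> s"
      by blast+
    then show ?thesis
      using rtrancl_links_verts [OF wf that assms(2)] by (simp add: sd_verts_rule1_res)
  qed
  have "u \<in> sd_verts D'"
    using in_D' [OF step.hyps(1)] .
  moreover have "w \<in> sd_verts D'"
    using in_D' [OF rtrancl.rtrancl_into_rtrancl [OF step.hyps]] .
  ultimately have "(u, w) \<in> links D'"
    using link_kept [OF step.hyps(2)] by blast
  then have "(u, w) \<in> links D'"
    using link_kept [OF step.hyps(2)] by blast
  with step.IH show ?case
    by (rule rtrancl.rtrancl_into_rtrancl)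
qed

lemma path_reaches_boundary:
  assumes "(v, w) \<in> (links D)\<^sup>*" "v \<in> sd_verts D'"
  shows "(v, w) \<in> (links D')\<^sup>* \<or> (\<exists>x\<in>boundary. (v, x) \<in> (links D')\<^sup>*)"
  using assms(1)
proof (induction rule: rtrancl_induct)
  case base
  show ?case by simp
next
  case (step u w)
  show ?case
  proof (cases "\<exists>x\<in>boundary. (v, x) \<in> (links D')\<^sup>*")
    case False
    with step.IH have vu: "(v, u) \<in> (links D')\<^sup>*"
      by simp
    have u: "u \<in> sd_verts D'"
      using rtrancl_links_verts [OF wf_D' vu assms(2)] .
    show ?thesis
    proof (cases "w \<in> {m, s}")
      case True
      then show ?thesis
        using link_to_redex [OF u step.hyps(2)] vu by blast
    next
      case False
      have "w \<in> sd_verts D"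
        using links_subset [OF wf] step.hyps(2) by auto
      with False have "(u, w) \<in> links D'"
        using link_kept [OF step.hyps(2) u] by (simp add: sd_verts_rule1_res)
      with vu show ?thesis
        by (meson rtrancl.rtrancl_into_rtrancl)
    qed
  qed simp
qed

lemma rerouted_to_t1:
  assumes "t1 \<notin> {(m, PL), (m, PR)}"
  shows "\<exists>p\<in>{x1, x2} \<inter> outports D'. N' p = t1"
proof (cases "t2 = (m, PL)")
  case True
  with assms have x2': "x2 \<in> outports D'"
    using x2_survives_iff by auto
  with True have "N' x2 = t1"
    using nxt_lab_D' [OF x2'] x1_x2(7) by simp
  with x2' show ?thesis
    by blast
next
  case False
  with assms have x1': "x1 \<in> outports D'"
    using x1_survives_iff by auto
  with assms have "N' x1 = t1"
    using nxt_lab_D' [OF x1'] by simp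
  with x1' show ?thesis
    by blast
qed

lemma rerouted_to_t2:
  assumes "t2 \<notin> {(m, PL), (m, PR)}"
  shows "\<exists>p\<in>{x1, x2} \<inter> outports D'. N' p = t2"
proof (cases "t1 = (m, PR)")
  case True
  with assms have x1': "x1 \<in> outports D'"
    using x1_survives_iff by auto
  with True have "N' x1 = t2"
    using nxt_lab_D' [OF x1'] by simp
  with x1' show ?thesis
    by blast
next
  case False
  with assms have x2': "x2 \<in> outports D'"
    using x2_survives_iff by auto
  with assms have "N' x2 = t2"
    using nxt_lab_D' [OF x2'] x1_x2(7) by simp
  with x2' show ?thesis
    by blast
qed

lemma boundary_reaches_rerouted:
  assumes "x \<in> boundary"
  shows "\<exists>r\<in>rerouted. (x, r) \<in> (links D')\<^sup>*"
proof -
  have reached: "\<exists>r\<in>rerouted. (x, r) \<in> (links D')\<^sup>*"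
    if p: "p \<in> {x1, x2} \<inter> outports D'" "fst (N' p) = x" for p
  proof -
    have "fst p \<in> rerouted"
      using p(1) by (simp add: rerouted_def)
    moreover from p have "(fst p, x) \<in> links D'"
      using link_outport [of p D'] by simp
    then have "(x, fst p) \<in> (links D')\<^sup>*"
      by (rule rtrancl_links_sym [OF r_into_rtrancl])
    ultimately show ?thesis
      by blast
  qed
  from assms consider "x \<in> {fst x1, fst x2}" "x \<notin> {m, s}" | "x = fst t1" "x \<notin> {m, s}"
    | "x = fst t2" "x \<notin> {m, s}"
    unfolding boundary_def by blast
  then show ?thesis
  proof cases
    case 1
    then have "x \<in> rerouted"
      using x1 x2 x1_x2(5,6) outports_D' by (auto simp: rerouted_def)
    then show ?thesis
      by blast
  next
    case 2
    then have "t1 \<notin> {(m, PL), (m, PR)}"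
      by auto
    then obtain p where p: "p \<in> {x1, x2} \<inter> outports D'" "N' p = t1"
      using rerouted_to_t1 by blast
    with 2 have "fst (N' p) = x"
      by simp
    then show ?thesis
      by (rule reached [OF p(1)])
  next
    case 3
    then have "t2 \<notin> {(m, PL), (m, PR)}"
      by auto
    then obtain p where p: "p \<in> {x1, x2} \<inter> outports D'" "N' p = t2"
      using rerouted_to_t2 by blast
    with 3 have "fst (N' p) = x"
      by simp
    then show ?thesis
      by (rule reached [OF p(1)])
  qed
qed

lemma card_rerouted: "card rerouted + size (sd_loops D') \<le> 2 + size (sd_loops D)"
proof -
  have "card rerouted \<le> card ({x1, x2} \<inter> outports D')"
    unfolding rerouted_def by (rule card_image_le) simp
  also have "\<dots> = (if x1 \<in> outports D' then 1 else 0) + (if x2 \<in> outports D' then 1 else 0)"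
    using x1_x2(7) by auto
  finally show ?thesis
    unfolding x1_survives_iff x2_survives_iff sd_loops_rule1_res
    using t1_t2(3) by (auto split: if_splits)
qed

lemma components_cover:
  defines "Q \<equiv> sd_verts D // comprel D" and "K \<equiv> comprel D `` {m}"
  assumes v: "v \<in> sd_verts D'"
  shows "\<exists>t \<in> some_elem ` (Q - {K}) \<union> rerouted. (v, t) \<in> comprel D'"
proof (cases "(v, m) \<in> (links D)\<^sup>*")
  case True
  have "(v, m) \<notin> (links D')\<^sup>*"
  proof
    assume "(v, m) \<in> (links D')\<^sup>*"
    then have "m \<in> sd_verts D'"
      using rtrancl_links_verts [OF wf_D' _ v] by blast
    then show False
      by (simp add: sd_verts_rule1_res)
  qed
  with path_reaches_boundary [OF True v] obtain x where "x \<in> boundary" "(v, x) \<in> (links D')\<^sup>*"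
    by blast
  moreover from \<open>x \<in> boundary\<close> obtain r where "r \<in> rerouted" "(x, r) \<in> (links D')\<^sup>*"
    using boundary_reaches_rerouted by blast
  moreover have "r \<in> sd_verts D'"
    using \<open>r \<in> rerouted\<close> fst_outport by (auto simp: rerouted_def)
  ultimately show ?thesis
    using v by (auto simp: comprel_links intro: rtrancl_trans)
next
  case False
  have v_D: "v \<in> sd_verts D"
    using v by (simp add: sd_verts_rule1_res)
  define X where "X = comprel D `` {v}"
  have "X \<in> Q"
    unfolding X_def Q_def using v_D by (rule quotientI)
  have "v \<in> X"
    unfolding X_def using equiv_comprel v_D by (rule equiv_class_self)
  then have "some_elem X \<in> X"
    by (auto intro: some_elem_nonempty)
  then have "(v, some_elem X) \<in> comprel D"
    unfolding X_def by blast
  then have r: "(v, some_elem X) \<in> (links D)\<^sup>*"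
    by (simp add: comprel_links)
  have "X \<noteq> K"
    using \<open>v \<in> X\<close> False unfolding K_def X_def by (auto simp: comprel_links intro: rtrancl_links_sym)
  moreover have "(v, some_elem X) \<in> (links D')\<^sup>*"
    using path_avoiding_m_kept [OF r v_D False] .
  moreover from this have "some_elem X \<in> sd_verts D'"
    using rtrancl_links_verts [OF wf_D' _ v] by blast
  ultimately show ?thesis
    using \<open>X \<in> Q\<close> v by (auto simp: comprel_links)
qed

lemma num_components_D': "num_components D' \<le> num_components D + 1"
proof -
  define Q where "Q = sd_verts D // comprel D"
  define K where "K = comprel D `` {m}"
  have "finite Q"
    unfolding Q_def using finite_verts by (rule finite_quotient) (auto simp: comprel_links)
  have "K \<in> Q"
    unfolding K_def Q_def using m_vert by (rule quotientI)
  have "finite rerouted"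
    by (simp add: rerouted_def)
  have "card (sd_verts D' // comprel D') \<le> card (some_elem ` (Q - {K}) \<union> rerouted)"
    using equiv_comprel \<open>finite Q\<close> \<open>finite rerouted\<close> components_cover
    unfolding Q_def K_def by (intro card_quotient_le_card_cover) auto
  also have "\<dots> \<le> card (Q - {K}) + card rerouted"
    by (rule order_trans [OF card_Un_le add_right_mono [OF card_image_le]]) (use \<open>finite Q\<close> in simp)
  also have "\<dots> = card Q - 1 + card rerouted"
    using \<open>K \<in> Q\<close> \<open>finite Q\<close> by simp
  finally show ?thesis
    using card_rerouted \<open>K \<in> Q\<close> \<open>finite Q\<close> card_gt_0_iff [of Q]
    unfolding num_components_def Q_def by fastforce
qed

end

lemma rule1_step_bounds:
  assumes wf: "wf_sd D" and step: "rule1_step D D'"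
  shows "wf_sd D'" "card (sd_verts D') + 2 = card (sd_verts D)"
    "num_components D' \<le> num_components D + 1" "label_sum D' \<le> 2 * label_sum D"
proof -
  obtain m s where redex: "m \<in> sd_verts D" "fst m" "s \<in> sd_verts D" "\<not> fst s"
    "sd_nxt D (m, PC) = (s, PC)" and D': "D' = rule1_res D m s"
    using step unfolding rule1_step_def by blast
  interpret rule1_redex D m s
    using wf redex by unfold_locales
  show "wf_sd D'"
    using wf_D' D' by simp
  have sub: "{m, s} \<subseteq> sd_verts D"
    using redex by simp
  have "card {m, s} = 2" "card {m, s} \<le> card (sd_verts D)"
    using m_neq_s card_mono [OF finite_verts sub] by auto
  then show "card (sd_verts D') + 2 = card (sd_verts D)"
    unfolding D' sd_verts_rule1_res card_Diff_subset [OF _ sub, simplified] by simp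
  show "num_components D' \<le> num_components D + 1"
    using num_components_D' D' by simp
  show "label_sum D' \<le> 2 * label_sum D"
    using label_sum_D' y_le_label_sum D' by simp
qed

section \<open>The initial diagram\<close>

definition splitout :: "bool list \<Rightarrow> vx \<times> port" where
  "splitout c = ((False, butlast c), if last c then PR else PL)"

lemma splitout_snoc: "splitout (a @ [x]) = ((False, a), if x then PR else PL)"
  by (simp add: splitout_def)

lemma mergein_snoc: "mergein (b @ [x]) = ((True, b), if x then PR else PL)"
  by (simp add: mergein_def)

lemma card_Pair_inodes: "card (Pair x ` inodes T) = nleaves T - 1"
  using length_leaves [of T] by (simp add: card_image inj_on_def nleaves_def)

locale initial_diagram =
  fixes Tm Tp :: btree and \<sigma> :: "nat \<Rightarrow> nat" and n :: nat
  assumes two_le_n: "2 \<le> n" and nleaves_Tm: "nleaves Tm = n" and nleaves_Tp: "nleaves Tp = n"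
    and bij_\<sigma>: "bij_betw \<sigma> {1..n} {1..n}"
begin

abbreviation "G \<equiv> D0 Tm Tp \<sigma>"
abbreviation "N0 \<equiv> sd_nxt G"

lemma Tm_not_Leaf: "Tm \<noteq> Leaf"
  using two_le_n nleaves_Tm nleaves_eq_1_iff [of Tm] by auto

lemma Tp_not_Leaf: "Tp \<noteq> Leaf"
  using two_le_n nleaves_Tp nleaves_eq_1_iff [of Tp] by auto

lemma length_leaves_Tm: "length (leaves Tm) = n"
  using nleaves_Tm by (simp add: nleaves_def)

lemma length_leaves_Tp: "length (leaves Tp) = n"
  using nleaves_Tp by (simp add: nleaves_def)

lemma verts_G: "sd_verts G = Pair False ` inodes Tm \<union> Pair True ` inodes Tp"
  by (simp add: D0_def)

lemma N0_splitout: "c \<noteq> [] \<Longrightarrow> N0 (splitout c) = childtgt Tm Tp \<sigma> c"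
  by (cases c rule: rev_cases) (simp_all add: D0_def splitout_snoc split: if_splits)

lemma N0_merge: "N0 ((True, b), PC) = (if b = [] then ((False, []), PC) else mergein b)"
  by (simp add: D0_def)

lemma outports_G_cases:
  assumes "p \<in> outports G"
  obtains c where "c \<noteq> []" "butlast c \<in> inodes Tm" "p = splitout c"
  | b where "b \<in> inodes Tp" "p = ((True, b), PC)"
proof -
  obtain v q where p: "p = (v, q)"
    by fastforce
  show thesis
  proof (cases "fst v")
    case False
    with assms p obtain a where "v = (False, a)" "a \<in> inodes Tm" "q = PL \<or> q = PR"
      by (auto simp: outports_def verts_G port_neq_PC_iff)
    then have "p = splitout (a @ [q = PR])" "butlast (a @ [q = PR]) \<in> inodes Tm"
      using p by (auto simp: splitout_snoc)
    then show thesis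
      using that(1) by blast
  next
    case True
    with assms p that(2) show thesis
      by (auto simp: outports_def verts_G)
  qed
qed

lemma inports_G_cases:
  assumes "t \<in> inports G"
  obtains c where "c \<in> inodes Tm" "t = ((False, c), PC)"
  | c where "c \<noteq> []" "butlast c \<in> inodes Tp" "t = mergein c"
proof -
  obtain v q where t: "t = (v, q)"
    by fastforce
  show thesis
  proof (cases "fst v")
    case True
    with assms t obtain b where "v = (True, b)" "b \<in> inodes Tp" "q = PL \<or> q = PR"
      by (auto simp: inports_def verts_G port_neq_PC_iff)
    then have "t = mergein (b @ [q = PR])" "butlast (b @ [q = PR]) \<in> inodes Tp"
      using t by (auto simp: mergein_snoc)
    then show thesis
      using that(2) by blast
  next
    case False
    with assms t that(1) show thesis
      by (auto simp: inports_def verts_G)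
  qed
qed

lemma splitout_outport: "c \<noteq> [] \<Longrightarrow> butlast c \<in> inodes Tm \<Longrightarrow> splitout c \<in> outports G"
  by (auto simp: splitout_def outports_def verts_G)

lemma merge_outport: "b \<in> inodes Tp \<Longrightarrow> ((True, b), PC) \<in> outports G"
  by (simp add: outports_def verts_G)

lemma mergein_inport: "c \<noteq> [] \<Longrightarrow> butlast c \<in> inodes Tp \<Longrightarrow> mergein c \<in> inports G"
  by (auto simp: mergein_def inports_def verts_G)

lemma split_inport: "c \<in> inodes Tm \<Longrightarrow> ((False, c), PC) \<in> inports G"
  by (simp add: inports_def verts_G)

lemma childtgt_inode: "c \<in> inodes Tm \<Longrightarrow> childtgt Tm Tp \<sigma> c = ((False, c), PC)"
  by (simp add: childtgt_def)

lemma childtgt_leaf: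
  "i < n \<Longrightarrow> childtgt Tm Tp \<sigma> (leaves Tm ! i) = mergein (leaves Tp ! (\<sigma> (i + 1) - 1))"
  using leaf_notin_inodes leafidx_nth [OF distinct_leaves] length_leaves_Tm
  by (simp add: childtgt_def)

lemma \<sigma>_leaf: "i < n \<Longrightarrow> \<sigma> (i + 1) - 1 < n"
  using bij_betw_apply [OF bij_\<sigma>, of "i + 1"] by (simp; arith)

lemma \<sigma>_leaf_surj: "j < n \<Longrightarrow> \<exists>i<n. \<sigma> (i + 1) - 1 = j"
proof -
  assume "j < n"
  moreover have "\<sigma> ` {1..n} = {1..n}"
    using bij_\<sigma> by (rule bij_betw_imp_surj_on)
  ultimately obtain k where "k \<in> {1..n}" "\<sigma> k = j + 1"
    by (metis atLeastAtMost_iff imageE le_add2 less_eq_Suc_le Suc_eq_plus1)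
  then have "k - 1 < n \<and> \<sigma> (k - 1 + 1) - 1 = j"
    by auto
  then show ?thesis
    by blast
qed

lemma childtgt_inport:
  assumes "c \<noteq> []" "butlast c \<in> inodes Tm"
  shows "childtgt Tm Tp \<sigma> c \<in> inports G"
proof -
  have "c \<in> inodes Tm \<or> c \<in> set (leaves Tm)"
    using snoc_in_tree [OF assms(2), of "last c"] assms(1) by simp
  then show ?thesis
  proof
    assume "c \<in> set (leaves Tm)"
    then obtain i where i: "i < n" "c = leaves Tm ! i"
      using length_leaves_Tm by (auto simp: in_set_conv_nth)
    define l where "l = leaves Tp ! (\<sigma> (i + 1) - 1)"
    have "l \<in> set (leaves Tp)"
      unfolding l_def using \<sigma>_leaf [OF i(1)] length_leaves_Tp by simp
    then have "l \<noteq> []" "butlast l \<in> inodes Tp"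
      using Nil_notin_leaves [OF Tp_not_Leaf] butlast_in_inodes by auto
    then show ?thesis
      using i childtgt_leaf mergein_inport unfolding l_def by simp
  qed (simp add: childtgt_inode split_inport)
qed

lemma N0_into: "N0 ` outports G \<subseteq> inports G"
proof
  fix t
  assume "t \<in> N0 ` outports G"
  then obtain p where p: "p \<in> outports G" "t = N0 p"
    by blast
  from p(1) show "t \<in> inports G"
  proof (cases rule: outports_G_cases)
    case (1 c)
    then show ?thesis
      using p(2) N0_splitout childtgt_inport by simp
  next
    case (2 b)
    then show ?thesis
      using p(2) N0_merge Nil_in_inodes [OF Tm_not_Leaf] split_inport
        butlast_in_inodes mergein_inport by auto
  qed
qed

lemma mergein_leaf_hit:
  assumes "c \<in> set (leaves Tp)"
  shows "mergein c \<in> N0 ` outports G"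
proof -
  obtain j where "j < n" "c = leaves Tp ! j"
    using assms length_leaves_Tp by (auto simp: in_set_conv_nth)
  then obtain i where i: "i < n" "c = leaves Tp ! (\<sigma> (i + 1) - 1)"
    using \<sigma>_leaf_surj by blast
  define u where "u = leaves Tm ! i"
  have "u \<in> set (leaves Tm)"
    unfolding u_def using i(1) length_leaves_Tm by simp
  then have "u \<noteq> []" "butlast u \<in> inodes Tm"
    using Nil_notin_leaves [OF Tm_not_Leaf] butlast_in_inodes by auto
  moreover have "mergein c = N0 (splitout u)"
    using i \<open>u \<noteq> []\<close> N0_splitout childtgt_leaf unfolding u_def by simp
  ultimately show ?thesis
    using splitout_outport by blast
qed

lemma N0_onto: "inports G \<subseteq> N0 ` outports G"
proof
  fix t
  assume "t \<in> inports G"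
  then show "t \<in> N0 ` outports G"
  proof (cases rule: inports_G_cases)
    case (1 c)
    show ?thesis
    proof (cases "c = []")
      case True
      then have "t = N0 ((True, []), PC)"
        using 1 N0_merge by simp
      then show ?thesis
        using merge_outport Nil_in_inodes [OF Tp_not_Leaf] by blast
    next
      case False
      then have "t = N0 (splitout c)"
        using 1 N0_splitout childtgt_inode by simp
      then show ?thesis
        using False 1 butlast_in_inodes splitout_outport by blast
    qed
  next
    case (2 c)
    have "c \<in> inodes Tp \<or> c \<in> set (leaves Tp)"
      using snoc_in_tree [OF 2(2), of "last c"] 2(1) by simp
    then show ?thesis
    proof
      assume "c \<in> inodes Tp"
      with 2 have "t = N0 ((True, c), PC)"
        using N0_merge by simp
      then show ?thesis
        using merge_outport [OF \<open>c \<in> inodes Tp\<close>] by blast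
    qed (use 2 mergein_leaf_hit in simp)
  qed
qed

lemma card_verts_G: "card (sd_verts G) = 2 * (n - 1)"
  unfolding verts_G
  by (subst card_Un_disjoint) (auto simp: finite_inodes card_Pair_inodes nleaves_Tm nleaves_Tp)

lemma wf_G: "wf_sd G"
proof -
  have fin: "finite (sd_verts G)"
    by (simp add: verts_G finite_inodes)
  have "{v \<in> sd_verts G. fst v} = Pair True ` inodes Tp" "{v \<in> sd_verts G. \<not> fst v} = Pair False ` inodes Tm"
    by (auto simp: verts_G)
  then have "card (outports G) = card (inports G)"
    using card_outports [OF fin] card_inports [OF fin]
    by (simp add: card_Pair_inodes nleaves_Tm nleaves_Tp)
  moreover have image: "N0 ` outports G = inports G"
    using N0_into N0_onto by blast
  ultimately have "inj_on N0 (outports G)"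
    by (intro eq_card_imp_inj_on) (simp_all add: finite_outports [OF fin])
  with fin image show ?thesis
    by (simp add: wf_sd_def bij_betw_def)
qed

lemma label_sum_G: "label_sum G = 1"
proof -
  have "((True, []), PC) \<in> outports G"
    using merge_outport Nil_in_inodes [OF Tp_not_Leaf] .
  moreover have "sd_lab G = (\<lambda>q. if q = ((True, []), PC) then 1 else 0)" "sd_loops G = {#}"
    using Tm_not_Leaf by (simp_all add: D0_def)
  ultimately show ?thesis
    using finite_outports [of G] by (simp add: label_sum_def verts_G finite_inodes)
qed

lemma split_linked_to_root: "a \<in> inodes Tm \<Longrightarrow> ((False, []), (False, a)) \<in> (links G)\<^sup>*"
proof (induction a rule: rev_induct)
  case Nil
  then show ?case by simp
next
  case (snoc x a)
  then have a: "a \<in> inodes Tm"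
    using butlast_in_inodes [of "a @ [x]" Tm] by simp
  have "N0 (splitout (a @ [x])) = ((False, a @ [x]), PC)"
    using snoc.prems N0_splitout childtgt_inode by simp
  moreover have "splitout (a @ [x]) \<in> outports G"
    using splitout_outport a by simp
  ultimately have "((False, a), (False, a @ [x])) \<in> links G"
    using link_outport by (fastforce simp: splitout_snoc)
  with snoc.IH [OF a] show ?case
    by (rule rtrancl.rtrancl_into_rtrancl)
qed

lemma merge_linked_to_root: "b \<in> inodes Tp \<Longrightarrow> ((True, b), (False, [])) \<in> (links G)\<^sup>*"
proof (induction b rule: rev_induct)
  case Nil
  then have "((True, []), (False, [])) \<in> links G"
    using link_outport [OF merge_outport] N0_merge by (metis fst_conv)
  then show ?case by simp
next
  case (snoc x b)
  then have b: "b \<in> inodes Tp"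
    using butlast_in_inodes [of "b @ [x]" Tp] by simp
  have "((True, b @ [x]), (True, b)) \<in> links G"
    using link_outport [OF merge_outport [OF snoc.prems]] N0_merge by (simp add: mergein_snoc)
  then show ?case
    using snoc.IH [OF b] by (rule converse_rtrancl_into_rtrancl)
qed

lemma num_components_G: "num_components G \<le> 1"
proof -
  have root: "(False, []) \<in> sd_verts G"
    using Nil_in_inodes [OF Tm_not_Leaf] by (simp add: verts_G)
  have "\<forall>v\<in>sd_verts G. \<exists>t\<in>{(False, [])}. (v, t) \<in> comprel G"
  proof
    fix v
    assume v: "v \<in> sd_verts G"
    then have "(v, (False, [])) \<in> (links G)\<^sup>*"
      unfolding verts_G using merge_linked_to_root split_linked_to_root rtrancl_links_sym by blast
    with v root show "\<exists>t\<in>{(False, [])}. (v, t) \<in> comprel G"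
      by (auto simp: comprel_links)
  qed
  then have "card (sd_verts G // comprel G) \<le> card {(False, [] :: bool list)}"
    by (intro card_quotient_le_card_cover [OF equiv_comprel]) simp_all
  moreover have "sd_loops G = {#}"
    using Tm_not_Leaf by (simp add: D0_def)
  ultimately show ?thesis
    by (simp add: num_components_def)
qed

end

section \<open>The invariant\<close>

(* Half the number of vertices bounds the number of further Rule I steps, each of which may
   double the label sum. *)
definition rule1_invariant :: "nat \<Rightarrow> sd \<Rightarrow> bool" where
  "rule1_invariant n D \<longleftrightarrow> wf_sd D
     \<and> 2 * num_components D + card (sd_verts D) \<le> 2 * n
     \<and> label_sum D * 2 ^ (card (sd_verts D) div 2) \<le> 2 ^ (n - 1)"

lemma rule1_invariant_D0:
  assumes "n \<ge> 1" "nleaves Tm = n" "nleaves Tp = n" "bij_betw \<sigma> {1..n} {1..n}"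
  shows "rule1_invariant n (D0 Tm Tp \<sigma>)"
proof (cases "n = 1")
  case True
  then have "Tm = Leaf" "Tp = Leaf"
    using assms(2,3) nleaves_eq_1_iff by auto
  then have "sd_verts (D0 Tm Tp \<sigma>) = {}" "sd_loops (D0 Tm Tp \<sigma>) = {#1#}"
    by (simp_all add: D0_def)
  moreover from this have "outports (D0 Tm Tp \<sigma>) = {}" "inports (D0 Tm Tp \<sigma>) = {}"
    by (auto simp: outports_def inports_def)
  ultimately show ?thesis
    using True by (simp add: rule1_invariant_def wf_sd_def bij_betw_def num_components_def label_sum_def)
next
  case False
  then interpret initial_diagram Tm Tp \<sigma> n
    using assms by unfold_locales auto
  show ?thesis
    using wf_G num_components_G card_verts_G label_sum_G False assms(1)
    by (simp add: rule1_invariant_def)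
qed

lemma rule1_invariant_step:
  assumes inv: "rule1_invariant n D" and step: "rule1_step D D'"
  shows "rule1_invariant n D'"
proof -
  have wf: "wf_sd D"
    using inv by (simp add: rule1_invariant_def)
  note bounds = rule1_step_bounds [OF wf step]
  define k where "k = card (sd_verts D') div 2"
  have k: "card (sd_verts D) div 2 = Suc k"
    using bounds(2) unfolding k_def by linarith
  have "label_sum D' * 2 ^ k \<le> label_sum D * 2 ^ Suc k"
    using bounds(4) by simp
  also have "\<dots> \<le> 2 ^ (n - 1)"
    using inv k by (simp add: rule1_invariant_def)
  finally show ?thesis
    using inv bounds unfolding rule1_invariant_def k_def by linarith
qed

theorem mainTheorem1:
  fixes Tm Tp :: btree and \<sigma> :: "nat \<Rightarrow> nat" and n :: nat and D :: sd
  assumes "n \<ge> 1"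
    and "nleaves Tm = n" and "nleaves Tp = n"
    and "bij_betw \<sigma> {1..n} {1..n}"
    and "rule1_step\<^sup>*\<^sup>* (D0 Tm Tp \<sigma>) D"
    and "terminal D"
  shows "num_components D \<le> n \<and> label_sum D \<le> 2 ^ (n - 1)"
proof -
  \<comment> \<open>The bounds hold along every reduction sequence.\<close>
  from assms(5) have "rule1_invariant n D"
    by (induction rule: rtranclp_induct)
      (use rule1_invariant_D0 [OF assms(1-4)] rule1_invariant_step in auto)
  then have "2 * num_components D \<le> 2 * n" "label_sum D * 2 ^ (card (sd_verts D) div 2) \<le> 2 ^ (n - 1)"
    by (auto simp: rule1_invariant_def)
  moreover have "label_sum D \<le> label_sum D * 2 ^ (card (sd_verts D) div 2)"
    by simp
  ultimately show ?thesis
    by linarith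
qed

end
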